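(* Let $P$ be a finite poset and $R$ a commutative unital ring. Then $J^3_1(P,R)=[I^3(P,R),I^3(P,R)]$.
   Context: For a finite poset $P$, $P^3_\le=\{(x,y,z)\in P^3: x\le y\le z\}$, and $I^3(P,R)$ is the $R$-module of functions $f:P^3_\le\to R$ with multiplication $(fg)(x_1,x_2,x_3)=\sum f(x_1,y_1,y_2)g(y_1,y_2,x_3)$ over all $x_1\le y_1\le x_2\le y_2\le x_3$. For $a\le b$, $l(a,b)$ is the maximum of $|C|-1$ over chains $C$ in the interval $[a,b]$. $J^3_1(P,R)=\{f: f(x_1,x_2,x_3)=0 \text{ whenever } l(x_1,x_3)<1\}$, i.e. $f$ vanishes on all $(x,x,x)$. $[f,g]=fg-gf$, and for subsets $U,V$, $[U,V]$ is the $R$-submodule spanned by all $[u,v]$, $u\in U$, $v\in V$. *)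

theory Defs
  imports Main
begin

text \<open>The finite poset P is the type 'a of class finite and order.
  A function on P^3_le is represented by a function 'a => 'a => 'a => 'r
  vanishing outside P^3_le.\<close>

definition I3 :: "('a::{finite,order} \<Rightarrow> 'a \<Rightarrow> 'a \<Rightarrow> 'r::comm_ring_1) set" where
  "I3 = {f. \<forall>x y z. \<not> (x \<le> y \<and> y \<le> z) \<longrightarrow> f x y z = 0}"

definition mult3 ::
  "('a::{finite,order} \<Rightarrow> 'a \<Rightarrow> 'a \<Rightarrow> 'r::comm_ring_1) \<Rightarrow> ('a \<Rightarrow> 'a \<Rightarrow> 'a \<Rightarrow> 'r) \<Rightarrow> ('a \<Rightarrow> 'a \<Rightarrow> 'a \<Rightarrow> 'r)" where
  "mult3 f g = (\<lambda>x1 x2 x3. if x1 \<le> x2 \<and> x2 \<le> x3 then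
      (\<Sum>(y1, y2) \<in> {(y1, y2). x1 \<le> y1 \<and> y1 \<le> x2 \<and> x2 \<le> y2 \<and> y2 \<le> x3}.
          f x1 y1 y2 * g y1 y2 x3)
    else 0)"

definition commutator3 ::
  "('a::{finite,order} \<Rightarrow> 'a \<Rightarrow> 'a \<Rightarrow> 'r::comm_ring_1) \<Rightarrow> ('a \<Rightarrow> 'a \<Rightarrow> 'a \<Rightarrow> 'r) \<Rightarrow> ('a \<Rightarrow> 'a \<Rightarrow> 'a \<Rightarrow> 'r)" where
  "commutator3 f g = mult3 f g - mult3 g f"

definition rspan :: "('a \<Rightarrow> 'a \<Rightarrow> 'a \<Rightarrow> 'r::comm_ring_1) set \<Rightarrow> ('a \<Rightarrow> 'a \<Rightarrow> 'a \<Rightarrow> 'r) set" where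
  "rspan S = {h. \<exists>T c. finite T \<and> T \<subseteq> S \<and>
       h = (\<lambda>x y z. \<Sum>g\<in>T. c g * g x y z)}"

definition comm_span3 :: "('a::{finite,order} \<Rightarrow> 'a \<Rightarrow> 'a \<Rightarrow> 'r::comm_ring_1) set
    \<Rightarrow> ('a \<Rightarrow> 'a \<Rightarrow> 'a \<Rightarrow> 'r) set \<Rightarrow> ('a \<Rightarrow> 'a \<Rightarrow> 'a \<Rightarrow> 'r) set" where
  "comm_span3 U V = rspan {commutator3 u v | u v. u \<in> U \<and> v \<in> V}"

definition len :: "'a::{finite,order} \<Rightarrow> 'a \<Rightarrow> nat" where
  "len a b = Max {card C - 1 | C. C \<subseteq> {a..b} \<and> Complete_Partial_Order.chain (\<le>) C}"

definition J3_1 :: "('a::{finite,order} \<Rightarrow> 'a \<Rightarrow> 'a \<Rightarrow> 'r::comm_ring_1) set" where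
  "J3_1 = {f \<in> I3. \<forall>x1 x2 x3. x1 \<le> x2 \<and> x2 \<le> x3 \<and> len x1 x3 < 1 \<longrightarrow> f x1 x2 x3 = 0}"

end

theory Submission
  imports Defs
begin

text \<open>Since \<open>l(x,z) = 0\<close> forces \<open>x = z\<close>, \<open>J\<^sup>3\<^sub>1\<close> consists of the functions
  vanishing on the diagonal. Every commutator does, because \<open>(fg)(x,x,x) = f(x,x,x) g(x,x,x)\<close>
  is symmetric in \<open>f\<close> and \<open>g\<close>. Conversely \<open>J\<^sup>3\<^sub>1\<close> is spanned by the indicator
  functions \<open>e(a,b,c)\<close> with \<open>a \<le> b \<le> c\<close> and \<open>a \<noteq> c\<close>, and each of them is the
  commutator \<open>[e(a,b,b), e(b,b,c)]\<close>: the product \<open>e(a,b,b) e(b,b,c)\<close> is \<open>e(a,b,c)\<close>,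
  while a nonzero product in the opposite order would need \<open>a = b = c\<close>.\<close>

type_synonym ('a, 'r) fun3 = "'a \<Rightarrow> 'a \<Rightarrow> 'a \<Rightarrow> 'r"

lemma finite_chain_lengths:
  "finite {card C - 1 | C.
     C \<subseteq> {a..b::'a::{finite,order}} \<and> Complete_Partial_Order.chain (\<le>) C}"
  using finite_image_set[of "\<lambda>C. C \<subseteq> {a..b} \<and> Complete_Partial_Order.chain (\<le>) C"]
  by simp

lemma len_refl: "len (x::'a::{finite,order}) x = 0"
proof -
  have "{card C - 1 | C. C \<subseteq> {x..x} \<and> Complete_Partial_Order.chain (\<le>) C} = {0}"
  proof (intro equalityI subsetI)
    fix n
    assume "n \<in> {card C - 1 | C. C \<subseteq> {x..x} \<and> Complete_Partial_Order.chain (\<le>) C}"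
    then obtain C where "n = card C - 1" "C \<subseteq> {x}" by auto
    then show "n \<in> {0}" using card_mono[of "{x}" C] by simp
  qed (auto intro: exI[of _ "{}"] chain_empty)
  then show ?thesis
    unfolding len_def by simp
qed

lemma one_le_len:
  assumes "(x::'a::{finite,order}) < y"
  shows "1 \<le> len x y"
proof -
  have "Complete_Partial_Order.chain (\<le>) {x, y}"
    using assms by (auto simp: Complete_Partial_Order.chain_def)
  then have "card {x, y} - 1
      \<in> {card C - 1 | C. C \<subseteq> {x..y} \<and> Complete_Partial_Order.chain (\<le>) C}"
    using assms by fastforce
  then have "card {x, y} - 1 \<le> len x y"
    unfolding len_def by (rule Max_ge[OF finite_chain_lengths])
  then show ?thesis
    using assms by simp
qed

lemma J3_1_eq_vanishing_on_diagonal: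
  "(J3_1 :: ('a::{finite,order}, 'r::comm_ring_1) fun3 set) = {f \<in> I3. \<forall>x. f x x x = 0}"
proof -
  have "x = y \<and> y = z" if "x \<le> y" "y \<le> z" "len x z < 1" for x y z :: 'a
  proof -
    have "\<not> x < z"
      using that(3) one_le_len[of x z] by auto
    then show ?thesis
      using that(1,2) by (metis order.antisym order.trans order.strict_iff_order)
  qed
  then show ?thesis
    unfolding J3_1_def by (auto simp: len_refl)
qed

definition delta3 :: "'a \<times> 'a \<times> 'a \<Rightarrow> ('a, 'r::{zero,one}) fun3" where
  "delta3 t = (\<lambda>x y z. if (x, y, z) = t then 1 else 0)"

definition offdiag3 :: "('a::order \<times> 'a \<times> 'a) set" where
  "offdiag3 = {(a, b, c). a \<le> b \<and> b \<le> c \<and> a \<noteq> c}"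

lemma inj_delta3: "inj (delta3 :: _ \<Rightarrow> ('a, 'r::zero_neq_one) fun3)"
proof (rule injI)
  fix s t :: "'a \<times> 'a \<times> 'a"
  assume "(delta3 s :: ('a, 'r) fun3) = delta3 t"
  then have "(delta3 s (fst t) (fst (snd t)) (snd (snd t)) :: 'r) = 1"
    by (simp add: delta3_def)
  then show "s = t"
    by (auto simp: delta3_def split: if_splits)
qed

lemma delta3_in_I3: "a \<le> b \<Longrightarrow> b \<le> c \<Longrightarrow> delta3 (a, b, c) \<in> I3"
  unfolding I3_def delta3_def by auto

lemma mult3_delta3_abb_bbc:
  fixes a b c :: "'a::{finite,order}"
  assumes "a \<le> b" "b \<le> c"
  shows "mult3 (delta3 (a, b, b)) (delta3 (b, b, c))
    = (delta3 (a, b, c) :: ('a, 'r::comm_ring_1) fun3)"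
proof (intro ext)
  fix x1 x2 x3 :: 'a
  let ?S = "{(y1, y2). x1 \<le> y1 \<and> y1 \<le> x2 \<and> x2 \<le> y2 \<and> y2 \<le> x3}"
  have "(\<Sum>(y1, y2) \<in> ?S. (delta3 (a, b, b) x1 y1 y2 :: 'r) * delta3 (b, b, c) y1 y2 x3)
      = (\<Sum>p \<in> ?S. if p = (b, b) then (if x1 = a \<and> x3 = c then 1 else 0) else 0)"
    by (rule sum.cong) (auto simp: delta3_def split: if_splits)
  also have "\<dots> = (if (b, b) \<in> ?S \<and> x1 = a \<and> x3 = c then 1 else 0)"
    by (subst sum.delta) auto
  also have "\<dots> = (if x1 = a \<and> x2 = b \<and> x3 = c then 1 else 0)"
    using assms by (auto dest: order.antisym)
  finally show "mult3 (delta3 (a, b, b)) (delta3 (b, b, c)) x1 x2 x3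
      = (delta3 (a, b, c) x1 x2 x3 :: 'r)"
    using assms by (auto simp: mult3_def delta3_def)
qed

lemma mult3_delta3_bbc_abb:
  fixes a b c :: "'a::{finite,order}"
  assumes "a \<noteq> c"
  shows "mult3 (delta3 (b, b, c)) (delta3 (a, b, b)) = (\<lambda>_ _ _. 0 :: 'r::comm_ring_1)"
  using assms by (intro ext) (auto simp: mult3_def delta3_def intro!: sum.neutral)

lemma commutator3_delta3:
  fixes a b c :: "'a::{finite,order}"
  assumes "a \<le> b" "b \<le> c" "a \<noteq> c"
  shows "commutator3 (delta3 (a, b, b)) (delta3 (b, b, c))
    = (delta3 (a, b, c) :: ('a, 'r::comm_ring_1) fun3)"
  using assms
  by (simp add: commutator3_def mult3_delta3_abb_bbc mult3_delta3_bbc_abb fun_diff_def)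

lemma commutator3_in_J3_1:
  fixes u v :: "('a::{finite,order}, 'r::comm_ring_1) fun3"
  shows "commutator3 u v \<in> J3_1"
proof -
  have "{(y1, y2). x \<le> y1 \<and> y1 \<le> x \<and> x \<le> y2 \<and> y2 \<le> x} = {(x, x)}" for x :: 'a
    by (auto dest: order.antisym)
  then show ?thesis
    unfolding J3_1_eq_vanishing_on_diagonal I3_def commutator3_def mult3_def
    by (simp add: mult.commute)
qed

lemma rspan_mono: "S \<subseteq> T \<Longrightarrow> rspan S \<subseteq> rspan T"
  unfolding rspan_def by blast

lemma rspan_subset_J3_1:
  assumes "S \<subseteq> J3_1"
  shows "rspan S \<subseteq> J3_1"
proof
  fix h assume "h \<in> rspan S"
  then obtain T c where "T \<subseteq> S" and h: "h = (\<lambda>x y z. \<Sum>g\<in>T. c g * g x y z)"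
    unfolding rspan_def by blast
  with assms have T: "T \<subseteq> J3_1"
    by blast
  then have off: "g x y z = 0" if "g \<in> T" "\<not> (x \<le> y \<and> y \<le> z)" for g x y z
    using that unfolding J3_1_eq_vanishing_on_diagonal I3_def by blast
  from T have diag: "g x x x = 0" if "g \<in> T" for g x
    using that unfolding J3_1_eq_vanishing_on_diagonal by blast
  show "h \<in> J3_1"
    unfolding h J3_1_eq_vanishing_on_diagonal I3_def
    by (auto simp: off diag intro!: sum.neutral)
qed

lemma lincomb_in_rspan:
  assumes "finite D" "inj_on e D"
  shows "(\<lambda>x y z. \<Sum>t\<in>D. c t * e t x y z) \<in> rspan (e ` D)"
proof -
  have "(\<Sum>g\<in>e ` D. c (inv_into D e g) * g x y z) = (\<Sum>t\<in>D. c t * e t x y z)" for x y z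
    using assms(2) by (simp add: sum.reindex inv_into_f_f cong: sum.cong)
  then show ?thesis
    unfolding rspan_def using assms(1)
    by (intro CollectI exI[of _ "e ` D"] exI[of _ "\<lambda>g. c (inv_into D e g)"]) auto
qed

lemma J3_1_delta3_expansion:
  assumes "f \<in> J3_1"
  shows "f = (\<lambda>x y z. \<Sum>t\<in>offdiag3. (\<lambda>(a, b, c). f a b c) t * delta3 t x y z)"
proof (intro ext)
  fix x y z
  have "(\<Sum>t\<in>offdiag3. (\<lambda>(a, b, c). f a b c) t * delta3 t x y z)
      = (if (x, y, z) \<in> offdiag3 then f x y z else 0)"
    by (simp add: delta3_def if_distrib sum.delta' cong: if_cong)
  also have "\<dots> = f x y z"
  proof (cases "x \<le> y \<and> y \<le> z")
    case True
    then show ?thesis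
      using assms by (auto simp: J3_1_eq_vanishing_on_diagonal offdiag3_def dest: order.antisym)
  next
    case False
    then show ?thesis
      using assms by (simp add: J3_1_eq_vanishing_on_diagonal I3_def)
  qed
  finally show "f x y z = (\<Sum>t\<in>offdiag3. (\<lambda>(a, b, c). f a b c) t * delta3 t x y z)" ..
qed

lemma J3_1_subset_rspan_delta3: "J3_1 \<subseteq> rspan (delta3 ` offdiag3)"
proof
  fix f :: "('a::{finite,order}, 'r::comm_ring_1) fun3"
  assume "f \<in> J3_1"
  then show "f \<in> rspan (delta3 ` offdiag3)"
    by (subst J3_1_delta3_expansion)
      (auto intro!: lincomb_in_rspan inj_on_subset[OF inj_delta3 subset_UNIV])
qed

lemma delta3_offdiag3_subset_commutators:
  "(delta3 ` offdiag3 :: ('a::{finite,order}, 'r::comm_ring_1) fun3 set)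
    \<subseteq> {commutator3 u v | u v. u \<in> I3 \<and> v \<in> I3}"
proof
  fix g assume "g \<in> (delta3 ` offdiag3 :: ('a, 'r) fun3 set)"
  then obtain a b c where "g = delta3 (a, b, c)" "a \<le> b" "b \<le> c" "a \<noteq> c"
    unfolding offdiag3_def by auto
  then have "g = commutator3 (delta3 (a, b, b)) (delta3 (b, b, c))"
    and "delta3 (a, b, b) \<in> (I3 :: ('a, 'r) fun3 set)"
    and "delta3 (b, b, c) \<in> (I3 :: ('a, 'r) fun3 set)"
    by (simp_all add: commutator3_delta3 delta3_in_I3)
  then show "g \<in> {commutator3 u v | u v. u \<in> I3 \<and> v \<in> I3}"
    by blast
qed

theorem proposition2p4:
  shows "(J3_1 :: ('a::{finite,order} \<Rightarrow> 'a \<Rightarrow> 'a \<Rightarrow> 'r::comm_ring_1) set)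
           = comm_span3 I3 I3"
proof
  have "rspan (delta3 ` offdiag3) \<subseteq> (comm_span3 I3 I3 :: ('a, 'r) fun3 set)"
    unfolding comm_span3_def by (rule rspan_mono[OF delta3_offdiag3_subset_commutators])
  with J3_1_subset_rspan_delta3 show "(J3_1 :: ('a, 'r) fun3 set) \<subseteq> comm_span3 I3 I3"
    by (rule order.trans)
  show "comm_span3 I3 I3 \<subseteq> J3_1"
    unfolding comm_span3_def by (rule rspan_subset_J3_1) (auto intro: commutator3_in_J3_1)
qed

end
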